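(* Consider two symmetric platforms with common effective driver arrival rate $e>0$ and common abandonment rate $\beta>0$, static prices $\phi_1,\phi_2\in[0,\phi_h]$, and total passenger rate $\Lambda>0$. The (unique) Wardrop equilibrium under the QoS metric $\mathcal D$ is $$(\lambda_1,\lambda_2)=\Bigl(\frac{\Lambda f(\phi_2)}{f(\phi_1)+f(\phi_2)},\ \frac{\Lambda f(\phi_1)}{f(\phi_1)+f(\phi_2)}\Bigr).$$
   Context: $f:[0,\phi_h]\to(0,1]$ is strictly concave, strictly decreasing, differentiable, $f(0)=1$. For platform $i$ with passenger rate $\lambda_i$, $\mathcal D_i(\lambda_i)=\bigl(\sum_{n\ge0}\frac{e^n}{\prod_{a=1}^n(\lambda_i f(\phi_i)+a\beta)}\bigr)^{-1}$ is the stationary probability of no waiting driver. The Wardrop equilibrium under QoS $\mathcal D$ is $\lambda_1\in\arg\min_{\lambda\in[0,\Lambda]}(\mathcal D_1(\lambda)-\mathcal D_2(\Lambda-\lambda))^2$, $\lambda_2=\Lambda-\lambda_1$. *)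

theory Defs
  imports "HOL-Analysis.Analysis"
begin

text \<open>Stationary probability of no waiting driver on platform i with passenger rate lam,
  price phi, effective driver arrival rate e and abandonment rate beta.\<close>
definition QoS_D :: "(real \<Rightarrow> real) \<Rightarrow> real \<Rightarrow> real \<Rightarrow> real \<Rightarrow> real \<Rightarrow> real" where
  "QoS_D f e beta phi lam =
     inverse (\<Sum>n. e ^ n / (\<Prod>a = 1..n. lam * f phi + real a * beta))"

definition wardrop_D ::
  "(real \<Rightarrow> real) \<Rightarrow> real \<Rightarrow> real \<Rightarrow> real \<Rightarrow> real \<Rightarrow> real \<Rightarrow> real \<times> real \<Rightarrow> bool" where
  "wardrop_D f e beta phi1 phi2 Lam p \<longleftrightarrow>
     (let g = (\<lambda>l. (QoS_D f e beta phi1 l - QoS_D f e beta phi2 (Lam - l))\<^sup>2) in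
      fst p \<in> {0..Lam} \<and> (\<forall>l\<in>{0..Lam}. g (fst p) \<le> g l) \<and> snd p = Lam - fst p)"

definition strictly_concave_on :: "real set \<Rightarrow> (real \<Rightarrow> real) \<Rightarrow> bool" where
  "strictly_concave_on S f \<longleftrightarrow>
     (\<forall>x\<in>S. \<forall>y\<in>S. \<forall>t. x \<noteq> y \<and> 0 < t \<and> t < 1 \<longrightarrow>
        f (t * x + (1 - t) * y) > t * f x + (1 - t) * f y)"

end

theory Submission
  imports Defs
begin

text \<open>
  The QoS of a platform depends on its passenger rate and price only through the effective
  load \<open>x = \<lambda> f \<phi>\<close>, and the series behind it, \<open>suminf (driver_series e \<beta> x)\<close>, is
  strictly decreasing in \<open>x \<ge> 0\<close>.  Hence the QoS values of the two platforms coincide iff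
  \<open>\<lambda>\<^sub>1 f \<phi>\<^sub>1 = \<lambda>\<^sub>2 f \<phi>\<^sub>2\<close>.  That balanced split of \<open>\<Lambda>\<close> exists, so the minimum of the
  squared QoS gap is \<open>0\<close> and is attained exactly there.
\<close>

definition driver_series :: "real \<Rightarrow> real \<Rightarrow> real \<Rightarrow> nat \<Rightarrow> real" where
  "driver_series e beta x n = e ^ n / (\<Prod>a = 1..n. x + real a * beta)"

lemma QoS_D_eq_driver_series:
  "QoS_D f e beta phi lam = inverse (suminf (driver_series e beta (lam * f phi)))"
  unfolding QoS_D_def driver_series_def by simp

lemma suminf_strict_mono:
  fixes f g :: "nat \<Rightarrow> real"
  assumes "summable f" "summable g" "\<And>n. f n \<le> g n" "f i < g i"
  shows "suminf f < suminf g"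
proof -
  have "0 < suminf (\<lambda>n. g n - f n)"
    using assms by (intro suminf_pos2[where i = i] summable_diff) auto
  then show ?thesis
    using suminf_diff[OF assms(2,1)] by simp
qed

lemma prod_shifted_pos:
  assumes "x \<ge> 0" "beta > 0"
  shows "(\<Prod>a = 1..n. x + real a * beta) > 0"
  using assms by (intro prod_pos) (auto intro!: add_nonneg_pos)

lemma prod_shifted_mono:
  assumes "0 \<le> x" "x \<le> y" "beta > 0"
  shows "(\<Prod>a = 1..n. x + real a * beta) \<le> (\<Prod>a = 1..n. y + real a * beta)"
  using assms by (intro prod_mono) auto

lemma fact_mult_power_le_prod_shifted:
  assumes "x \<ge> 0" "beta > 0"
  shows "fact n * beta ^ n \<le> (\<Prod>a = 1..n. x + real a * beta)"
proof -
  have "fact n * beta ^ n = (\<Prod>a = 1..n. 0 + real a * beta)"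
    by (simp add: prod.distrib fact_prod)
  also have "\<dots> \<le> (\<Prod>a = 1..n. x + real a * beta)"
    using assms by (intro prod_shifted_mono) auto
  finally show ?thesis .
qed

lemma summable_driver_series:
  assumes "x \<ge> 0" "beta > 0"
  shows "summable (driver_series e beta x)"
proof (rule summable_comparison_test[OF _ summable_exp_generic[of "\<bar>e\<bar> / beta"]])
  show "\<exists>N. \<forall>n\<ge>N. norm (driver_series e beta x n) \<le> (\<bar>e\<bar> / beta) ^ n /\<^sub>R fact n"
  proof (intro exI allI impI)
    fix n
    have "norm (driver_series e beta x n) = \<bar>e\<bar> ^ n / (\<Prod>a = 1..n. x + real a * beta)"
      using prod_shifted_pos[OF assms, of n]
      by (simp add: driver_series_def abs_divide power_abs)
    also have "\<dots> \<le> \<bar>e\<bar> ^ n / (fact n * beta ^ n)"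
      using assms prod_shifted_pos[OF assms, of n]
      by (intro divide_left_mono fact_mult_power_le_prod_shifted mult_pos_pos) auto
    also have "\<dots> = (\<bar>e\<bar> / beta) ^ n /\<^sub>R fact n"
      by (simp add: power_divide field_simps)
    finally show "norm (driver_series e beta x n) \<le> (\<bar>e\<bar> / beta) ^ n /\<^sub>R fact n" .
  qed
qed

lemma strict_antimono_driver_series:
  assumes "e > 0" "beta > 0"
  shows "strict_antimono_on {0..} (\<lambda>x. suminf (driver_series e beta x))"
proof (rule monotone_onI)
  fix x y :: real
  assume "x \<in> {0..}" "y \<in> {0..}" "x < y"
  then have "0 \<le> x" "x < y" by auto
  show "suminf (driver_series e beta y) < suminf (driver_series e beta x)"
  proof (rule suminf_strict_mono[where i = 1])
    show "summable (driver_series e beta x)" "summable (driver_series e beta y)"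
      using \<open>0 \<le> x\<close> \<open>x < y\<close> assms by (auto intro: summable_driver_series)
    show "driver_series e beta y n \<le> driver_series e beta x n" for n
      unfolding driver_series_def using \<open>0 \<le> x\<close> \<open>x < y\<close> assms
      by (intro divide_left_mono prod_shifted_mono mult_pos_pos prod_shifted_pos) auto
    show "driver_series e beta y 1 < driver_series e beta x 1"
      unfolding driver_series_def using \<open>0 \<le> x\<close> \<open>x < y\<close> assms
      by (simp add: divide_strict_left_mono)
  qed
qed

lemma QoS_D_eq_iff_load_eq:
  assumes "e > 0" "beta > 0" "lam1 * f phi1 \<ge> 0" "lam2 * f phi2 \<ge> 0"
  shows "QoS_D f e beta phi1 lam1 = QoS_D f e beta phi2 lam2 \<longleftrightarrow> lam1 * f phi1 = lam2 * f phi2"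
proof -
  have "inj_on (\<lambda>x. suminf (driver_series e beta x)) {0..}"
    using strict_antimono_iff_antimono strict_antimono_driver_series[OF assms(1,2)] by blast
  then show ?thesis
    using assms(3,4) by (auto simp: QoS_D_eq_driver_series inj_on_def)
qed

lemma is_min_square_gap_iff:
  fixes u v :: "'a \<Rightarrow> real"
  assumes "z \<in> S" "u z = v z"
  shows "(\<forall>l\<in>S. (u x - v x)\<^sup>2 \<le> (u l - v l)\<^sup>2) \<longleftrightarrow> u x = v x"
  using assms by force

lemma wardrop_D_iff_load_balance:
  assumes "e > 0" "beta > 0" "f phi1 \<ge> 0" "f phi2 \<ge> 0"
    and "z \<in> {0..Lam}" "z * f phi1 = (Lam - z) * f phi2"
  shows "wardrop_D f e beta phi1 phi2 Lam p \<longleftrightarrow>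
           fst p \<in> {0..Lam} \<and> fst p * f phi1 = (Lam - fst p) * f phi2 \<and> snd p = Lam - fst p"
proof -
  have balance_iff: "QoS_D f e beta phi1 l = QoS_D f e beta phi2 (Lam - l)
                       \<longleftrightarrow> l * f phi1 = (Lam - l) * f phi2" if "l \<in> {0..Lam}" for l
    using that assms(1-4) by (intro QoS_D_eq_iff_load_eq) auto
  have "(\<forall>l\<in>{0..Lam}. (QoS_D f e beta phi1 (fst p) - QoS_D f e beta phi2 (Lam - fst p))\<^sup>2
                       \<le> (QoS_D f e beta phi1 l - QoS_D f e beta phi2 (Lam - l))\<^sup>2)
        \<longleftrightarrow> QoS_D f e beta phi1 (fst p) = QoS_D f e beta phi2 (Lam - fst p)"
    using assms(5,6) balance_iff[OF assms(5)]
    by (intro is_min_square_gap_iff[where z = z]) auto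
  then show ?thesis
    unfolding wardrop_D_def Let_def using balance_iff by blast
qed

theorem lemma5:
  fixes f :: "real \<Rightarrow> real" and phi_h e beta Lam phi1 phi2 :: real
  assumes "phi_h > 0"
    and "f ` {0..phi_h} \<subseteq> {0<..1}"
    and "strictly_concave_on {0..phi_h} f"
    and "\<forall>x\<in>{0..phi_h}. \<forall>y\<in>{0..phi_h}. x < y \<longrightarrow> f y < f x"
    and "f differentiable_on {0..phi_h}"
    and "f 0 = 1"
    and "e > 0" and "beta > 0" and "Lam > 0"
    and "phi1 \<in> {0..phi_h}" and "phi2 \<in> {0..phi_h}"
  shows "\<forall>p. wardrop_D f e beta phi1 phi2 Lam p \<longleftrightarrow>
           p = (Lam * f phi2 / (f phi1 + f phi2), Lam * f phi1 / (f phi1 + f phi2))"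
proof
  fix p :: "real \<times> real"
  have f1: "f phi1 > 0" and f2: "f phi2 > 0"
    using assms(2,10,11) by (auto simp: image_subset_iff)
  define z where "z = Lam * f phi2 / (f phi1 + f phi2)"
  have z_range: "z \<in> {0..Lam}" and Lam_minus_z: "Lam - z = Lam * f phi1 / (f phi1 + f phi2)"
    unfolding z_def using f1 f2 assms(9) by (auto simp: field_simps)
  have balance_iff: "l * f phi1 = (Lam - l) * f phi2 \<longleftrightarrow> l = z" for l
    unfolding z_def using f1 f2 by (auto simp: field_simps)
  have "wardrop_D f e beta phi1 phi2 Lam p \<longleftrightarrow> fst p = z \<and> snd p = Lam - z"
    using wardrop_D_iff_load_balance[of e beta f phi1 phi2 z Lam] assms(7,8) f1 f2
      balance_iff z_range by auto
  then show "wardrop_D f e beta phi1 phi2 Lam p \<longleftrightarrow>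
           p = (Lam * f phi2 / (f phi1 + f phi2), Lam * f phi1 / (f phi1 + f phi2))"
    by (metis Lam_minus_z z_def prod.collapse prod.inject)
qed

end
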